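(* Let $\mathcal I'$ be an instance whose $n$ data points (each in exactly one of $\ell$ groups) are located at a set $\mathcal C=\{c_1,\dots,c_k\}$ of locations in a metric space, and consider the exactly fair assignment problem on $\mathcal C$. Let $r$ be a $3$-approximately fair assignment of the data points to centers in $\mathcal C$ whose cost is at most the cost $\mathrm{OPT}_{\mathcal I'}$ of an optimal exactly fair assignment of $\mathcal I'$, and let $\mathcal I''$ be the instance obtained by moving each data point to the center it is assigned to by $r$. If there is a $\beta_k$-approximation algorithm for the exactly fair assignment problem on $\mathcal I''$, then there is a $(2\beta_k+1)$-approximation algorithm for the exactly fair assignment problem on $\mathcal I'$.
   Context: Let $X$ be the data points, $X_1,\dots,X_\ell$ the groups, $f$ the fairlet size (minimum size of a non-empty $S\subseteq X$ with $|S\cap X_j|=\frac{|X_j|}{|X|}|S|$ for all $j$) and $f_j$ the number of group-$j$ points in a fairlet, so $f_j/f=|X_j|/|X|$. An assignment maps each data point to a center in $\mathcal C$; its cost is the sum of distances from each point's location to its center. It is exactly fair if every cluster $S$ satisfies $|S\cap X_j|=\frac{f_j}{f}|S|$ for all $j$, and $\gamma$-approximately fair if every cluster $S$ satisfies $\bigl||S\cap X_j|-\frac{f_j}{f}|S|\bigr|\le\gamma$ for all $j$. A $\rho$-approximation algorithm returns an exactly fair assignment of cost at most $\rho$ times the optimum. *)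

theory Defs
  imports "HOL-Analysis.Analysis"
begin

definition is_assignment :: "'p set \<Rightarrow> 'a set \<Rightarrow> ('p \<Rightarrow> 'a) \<Rightarrow> bool" where
  "is_assignment P C \<sigma> \<longleftrightarrow> \<sigma> ` P \<subseteq> C"

definition assign_cost :: "'p set \<Rightarrow> ('p \<Rightarrow> 'a::metric_space) \<Rightarrow> ('p \<Rightarrow> 'a) \<Rightarrow> real" where
  "assign_cost P loc \<sigma> = (\<Sum>p\<in>P. dist (loc p) (\<sigma> p))"

definition cluster :: "'p set \<Rightarrow> ('p \<Rightarrow> 'a) \<Rightarrow> 'a \<Rightarrow> 'p set" where
  "cluster P \<sigma> c = {p\<in>P. \<sigma> p = c}"

definition group_set :: "'p set \<Rightarrow> ('p \<Rightarrow> 'g) \<Rightarrow> 'g \<Rightarrow> 'p set" where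
  "group_set P grp j = {p\<in>P. grp p = j}"

definition approx_fair ::
  "real \<Rightarrow> 'p set \<Rightarrow> ('p \<Rightarrow> 'g) \<Rightarrow> 'a set \<Rightarrow> ('p \<Rightarrow> 'a) \<Rightarrow> bool" where
  "approx_fair \<gamma> P grp C \<sigma> \<longleftrightarrow> is_assignment P C \<sigma> \<and>
     (\<forall>c\<in>C. \<forall>j. \<bar>real (card (cluster P \<sigma> c \<inter> group_set P grp j))
         - real (card (group_set P grp j)) / real (card P) * real (card (cluster P \<sigma> c))\<bar> \<le> \<gamma>)"

definition exactly_fair ::
  "'p set \<Rightarrow> ('p \<Rightarrow> 'g) \<Rightarrow> 'a set \<Rightarrow> ('p \<Rightarrow> 'a) \<Rightarrow> bool" where
  "exactly_fair P grp C \<sigma> \<longleftrightarrow> is_assignment P C \<sigma> \<and>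
     (\<forall>c\<in>C. \<forall>j. real (card (cluster P \<sigma> c \<inter> group_set P grp j))
         = real (card (group_set P grp j)) / real (card P) * real (card (cluster P \<sigma> c)))"

definition OPT ::
  "'p set \<Rightarrow> ('p \<Rightarrow> 'g) \<Rightarrow> ('p \<Rightarrow> 'a::metric_space) \<Rightarrow> 'a set \<Rightarrow> real" where
  "OPT P grp loc C = Inf {assign_cost P loc \<sigma> | \<sigma>. exactly_fair P grp C \<sigma>}"

text \<open>sigma is the output of a rho-approximation algorithm on the instance.\<close>
definition rho_approx_solution ::
  "real \<Rightarrow> 'p set \<Rightarrow> ('p \<Rightarrow> 'g) \<Rightarrow> ('p \<Rightarrow> 'a::metric_space) \<Rightarrow> 'a set \<Rightarrow> ('p \<Rightarrow> 'a) \<Rightarrow> bool" where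
  "rho_approx_solution \<rho> P grp loc C \<sigma> \<longleftrightarrow>
     exactly_fair P grp C \<sigma> \<and> assign_cost P loc \<sigma> \<le> \<rho> * OPT P grp loc C"

end

theory Submission
  imports Defs
begin

text \<open>Moving every point from loc to its r-center changes the cost of any assignment by at
  most cost(r), which is at most OPT. Hence the optimum of the moved instance is at most
  2 OPT, and by the triangle inequality the cost of sigma on the original instance is at most
  cost(r) + beta * 2 OPT \<le> (2 beta + 1) OPT.\<close>

lemma assign_cost_triangle:
  fixes l1 l2 :: "'p \<Rightarrow> 'a::metric_space"
  shows "assign_cost P l1 \<sigma> \<le> assign_cost P l1 l2 + assign_cost P l2 \<sigma>"
  unfolding assign_cost_def sum.distrib[symmetric]
  by (rule sum_mono) (rule dist_triangle)

lemma assign_cost_commute: "assign_cost P l1 l2 = assign_cost P l2 l1"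
  unfolding assign_cost_def by (simp add: dist_commute)

lemma OPT_le_assign_cost:
  assumes "exactly_fair P grp C \<tau>"
  shows "OPT P grp loc C \<le> assign_cost P loc \<tau>"
  unfolding OPT_def
proof (rule cInf_lower)
  show "assign_cost P loc \<tau> \<in> {assign_cost P loc \<sigma> |\<sigma>. exactly_fair P grp C \<sigma>}"
    using assms by blast
  show "bdd_below {assign_cost P loc \<sigma> |\<sigma>. exactly_fair P grp C \<sigma>}"
    by (rule bdd_belowI[where m=0]) (auto simp: assign_cost_def intro!: sum_nonneg)
qed

lemma OPT_move_locations:
  fixes l1 l2 :: "'p \<Rightarrow> 'a::metric_space"
  assumes "exactly_fair P grp C \<sigma>"
  shows "OPT P grp l2 C \<le> OPT P grp l1 C + assign_cost P l1 l2"
proof -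
  have "OPT P grp l2 C - assign_cost P l1 l2 \<le> OPT P grp l1 C"
    unfolding OPT_def[of P grp l1 C]
  proof (rule cInf_greatest)
    show "{assign_cost P l1 \<tau> |\<tau>. exactly_fair P grp C \<tau>} \<noteq> {}"
      using assms by blast
  next
    fix x assume "x \<in> {assign_cost P l1 \<tau> |\<tau>. exactly_fair P grp C \<tau>}"
    then obtain \<tau> where fair: "exactly_fair P grp C \<tau>" and x: "x = assign_cost P l1 \<tau>"
      by blast
    have "OPT P grp l2 C \<le> assign_cost P l2 \<tau>"
      using fair by (rule OPT_le_assign_cost)
    also have "\<dots> \<le> assign_cost P l1 l2 + x"
      using assign_cost_triangle[of P l2 \<tau> l1] assign_cost_commute[of P l2 l1] x by simp
    finally show "OPT P grp l2 C - assign_cost P l1 l2 \<le> x"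
      by simp
  qed
  then show ?thesis
    by simp
qed

theorem lemma2:
  fixes P :: "'p set" and grp :: "'p \<Rightarrow> 'g" and loc :: "'p \<Rightarrow> 'a::metric_space"
    and C :: "'a set" and r \<sigma> :: "'p \<Rightarrow> 'a" and \<beta> :: real
  assumes "\<beta> \<ge> 1" and "finite P" and "finite C"
    and "loc ` P \<subseteq> C"
    and "approx_fair 3 P grp C r"
    and "assign_cost P loc r \<le> OPT P grp loc C"
    and "rho_approx_solution \<beta> P grp r C \<sigma>"
  shows "rho_approx_solution (2 * \<beta> + 1) P grp loc C \<sigma>"
proof -
  let ?OPT = "OPT P grp loc C"
  have fair: "exactly_fair P grp C \<sigma>" and moved: "assign_cost P r \<sigma> \<le> \<beta> * OPT P grp r C"
    using assms(7) unfolding rho_approx_solution_def by auto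
  have "OPT P grp r C \<le> 2 * ?OPT"
    using OPT_move_locations[OF fair, of r loc] assms(6) by simp
  then have moved_OPT: "\<beta> * OPT P grp r C \<le> \<beta> * (2 * ?OPT)"
    using assms(1) by (intro mult_left_mono) auto
  have "assign_cost P loc \<sigma> \<le> assign_cost P loc r + assign_cost P r \<sigma>"
    by (rule assign_cost_triangle)
  also have "\<dots> \<le> ?OPT + \<beta> * (2 * ?OPT)"
    using assms(6) moved moved_OPT by linarith
  finally have "assign_cost P loc \<sigma> \<le> (2 * \<beta> + 1) * ?OPT"
    by (simp add: algebra_simps)
  with fair show ?thesis
    unfolding rho_approx_solution_def by simp
qed

end
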